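(* Let $\kappa\in(0,1)$, $\gamma>0$, and let $S=((x_i,y_i))_{i=1}^n\subset\mathcal{X}\times\{\pm1\}$. Run the boosting procedure with measure rule LB-NxM$(\kappa,\gamma/4)$ (described in the context) and any real-valued weak learner with advantage $\gamma$, for $T\ge 16\log(1/\kappa)/\gamma^2$ rounds, and let $H=\frac1T\sum_{t=1}^T h_t:\mathcal{X}\to[-1,1]$ be the aggregated hypothesis. Then: (Good margin) $\Pr_{(x,y)\sim \mathcal{U}(S)}[yH(x)\le\gamma]\le\kappa$; (Smoothness) every distribution $\hat\mu_t$ supplied to the weak learner satisfies $\hat\mu_t(i)\le \frac{1}{\kappa n}$ for all $i\in[n]$.
   Context: Measures on $[n]$: $\mu:[n]\to[0,1]$, $|\mu|=\sum_i\mu(i)$, density $d(\mu)=|\mu|/n$, induced distribution $\hat\mu(i)=\mu(i)/|\mu|$; $\mathrm{KL}(\mu_1\|\mu_2)=\sum_i\mu_1(i)\log(\mu_1(i)/\mu_2(i))+\mu_2(i)-\mu_1(i)$; $\Gamma_\kappa=\{\mu:d(\mu)\ge\kappa\}$; $\Pi_{\Gamma_\kappa}\tilde\mu=\arg\min_{\mu\in\Gamma_\kappa}\mathrm{KL}(\mu\|\tilde\mu)$. A weak learner with advantage $\gamma$: given $S$ and a distribution $\hat\mu$ on $[n]$, outputs $h:\mathcal{X}\to[-1,1]$ with $\frac12\sum_{j}\hat\mu(j)|h(x_j)-y_j|\le\frac12-\gamma$. LB-NxM$(\kappa,\lambda)$ on input $S$ and hypotheses $h_1,\dots,h_{t}$: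 $\ell_j(i)=1-\frac12|h_j(x_i)-y_i|$, $\tilde\mu_{t+1}(i)=\kappa e^{-\lambda\sum_{j=1}^t\ell_j(i)}$, $\mu_{t+1}=\Pi_{\Gamma_\kappa}\tilde\mu_{t+1}$, return $\hat\mu_{t+1}$. Boosting procedure: starting from the empty list, in each round $t$ compute $\hat\mu_t=$ LB-NxM$(S,(h_1,\dots,h_{t-1}))$, call the weak learner on $(S,\hat\mu_t)$ to get $h_t$, and append it. $\mathcal U(S)$ is the uniform distribution over the $n$ examples. *)

theory Defs
  imports Complex_Main
begin

text \<open>Examples are indexed by 0,...,n-1. A measure on [n] is a function
  nat => real vanishing outside {..<n} with values in [0,1].\<close>

definition measures :: "nat \<Rightarrow> (nat \<Rightarrow> real) set" where
  "measures n = {\<mu>. (\<forall>i<n. 0 \<le> \<mu> i \<and> \<mu> i \<le> 1) \<and> (\<forall>i\<ge>n. \<mu> i = 0)}"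

definition msize :: "nat \<Rightarrow> (nat \<Rightarrow> real) \<Rightarrow> real" where
  "msize n \<mu> = (\<Sum>i<n. \<mu> i)"

definition density :: "nat \<Rightarrow> (nat \<Rightarrow> real) \<Rightarrow> real" where
  "density n \<mu> = msize n \<mu> / real n"

definition induced :: "nat \<Rightarrow> (nat \<Rightarrow> real) \<Rightarrow> nat \<Rightarrow> real" where
  "induced n \<mu> = (\<lambda>i. \<mu> i / msize n \<mu>)"

text \<open>Generalized KL divergence (with the convention 0 log 0 = 0, which holds
  automatically since the term is multiplied by mu1 i).\<close>
definition KL :: "nat \<Rightarrow> (nat \<Rightarrow> real) \<Rightarrow> (nat \<Rightarrow> real) \<Rightarrow> real" where
  "KL n \<mu>1 \<mu>2 = (\<Sum>i<n. \<mu>1 i * ln (\<mu>1 i / \<mu>2 i) + \<mu>2 i - \<mu>1 i)"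

definition Gamma :: "real \<Rightarrow> nat \<Rightarrow> (nat \<Rightarrow> real) set" where
  "Gamma \<kappa> n = {\<mu> \<in> measures n. density n \<mu> \<ge> \<kappa>}"

definition proj :: "real \<Rightarrow> nat \<Rightarrow> (nat \<Rightarrow> real) \<Rightarrow> nat \<Rightarrow> real" where
  "proj \<kappa> n \<mu>t = (SOME \<mu>. \<mu> \<in> Gamma \<kappa> n \<and> (\<forall>\<nu>\<in>Gamma \<kappa> n. KL n \<mu> \<mu>t \<le> KL n \<nu> \<mu>t))"

definition gain :: "('x \<Rightarrow> real) \<Rightarrow> (nat \<Rightarrow> 'x) \<Rightarrow> (nat \<Rightarrow> real) \<Rightarrow> nat \<Rightarrow> real" where
  "gain h X Y i = 1 - \<bar>h (X i) - Y i\<bar> / 2"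

definition lb_nxm :: "real \<Rightarrow> real \<Rightarrow> nat \<Rightarrow> (nat \<Rightarrow> 'x) \<Rightarrow> (nat \<Rightarrow> real)
    \<Rightarrow> (nat \<Rightarrow> 'x \<Rightarrow> real) \<Rightarrow> nat \<Rightarrow> nat \<Rightarrow> real" where
  "lb_nxm \<kappa> lam n X Y h t =
     (let \<mu>t = (\<lambda>i. if i < n then \<kappa> * exp (- lam * (\<Sum>j\<in>{1..<t}. gain (h j) X Y i)) else 0)
      in induced n (proj \<kappa> n \<mu>t))"

definition weak_hyp :: "real \<Rightarrow> nat \<Rightarrow> (nat \<Rightarrow> 'x) \<Rightarrow> (nat \<Rightarrow> real)
    \<Rightarrow> (nat \<Rightarrow> real) \<Rightarrow> ('x \<Rightarrow> real) \<Rightarrow> bool" where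
  "weak_hyp \<gamma> n X Y D h \<longleftrightarrow>
     (\<forall>z. -1 \<le> h z \<and> h z \<le> 1) \<and>
     (1/2) * (\<Sum>j<n. D j * \<bar>h (X j) - Y j\<bar>) \<le> 1/2 - \<gamma>"

end

(* The boosting run is multiplicative weights with lazy KL projections onto the
   measures of density at least kappa.  The potential KL(mu_t || mu~_t) grows in every
   round by at least sum_i mu_t(i) (1 - exp (-eta l_t(i))), by the generalized Pythagorean
   inequality of the projection; the weak learner makes this at least
   eta (1/2 + gamma - eta/2) kappa n.  At the end the potential is at most
   KL(v || mu~_{T+1}) for every v of density at least kappa.  Taking v uniform of total
   mass kappa n on the set E of examples of margin at most gamma, whose cumulative gain is
   at most T (1 + gamma) / 2, gives T eta (gamma - eta) / 2 <= ln (n / |E|) whenever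
   |E| >= kappa n; for eta = gamma/4 and T >= 16 ln (1/kappa) / gamma^2 this forces
   |E| <= kappa n.  Smoothness holds because every projection has entries at most 1 and
   mass at least kappa n. *)

theory Submission
  imports Defs
begin

section \<open>The KL divergence of measures\<close>

definition kl_term :: "real \<Rightarrow> real \<Rightarrow> real" where
  "kl_term x a = x * ln (x / a) + a - x"

lemma KL_eq_sum_kl_term: "KL n \<mu> \<nu> = (\<Sum>i<n. kl_term (\<mu> i) (\<nu> i))"
  by (simp add: KL_def kl_term_def)

lemma kl_term_zero [simp]: "kl_term 0 a = a"
  by (simp add: kl_term_def)

lemma kl_term_nonneg:
  assumes "0 < a" "0 \<le> x"
  shows "0 \<le> kl_term x a"
proof (cases "x = 0")
  case False
  then have x: "0 < x" using assms by simp
  have "x * ln (a / x) \<le> x * (a / x - 1)"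
    using ln_le_minus_one[of "a / x"] assms x by (simp add: mult_left_mono)
  also have "\<dots> = a - x" using x by (simp add: field_simps)
  finally show ?thesis using assms x by (simp add: kl_term_def ln_div algebra_simps)
qed (use assms in simp)

lemma kl_term_le_0_imp_eq:
  assumes "0 < a" "0 \<le> x" "kl_term x a \<le> 0"
  shows "x = a"
proof (cases "x = 0")
  case False
  then have x: "0 < x" using assms by simp
  have "ln (a / x) = a / x - 1"
  proof (rule ccontr)
    assume "ln (a / x) \<noteq> a / x - 1"
    then have "ln (a / x) < a / x - 1"
      using ln_le_minus_one[of "a / x"] assms x by simp
    then have "x * ln (a / x) < x * (a / x - 1)" using x by simp
    also have "\<dots> = a - x" using x by (simp add: field_simps)
    finally show False using assms x by (simp add: kl_term_def ln_div algebra_simps)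
  qed
  then have "a / x = 1" using ln_eq_minus_one[of "a / x"] assms x by simp
  then show ?thesis using x by simp
qed (use assms in simp)

lemma kl_term_three_point:
  assumes "0 < a" "0 < b" "0 \<le> x"
  shows "kl_term x a = kl_term x b + kl_term b a + (x - b) * ln (b / a)"
proof (cases "x = 0")
  case False
  then have "ln (x / a) = ln (x / b) + ln (b / a)" using assms by (simp add: ln_div)
  then show ?thesis by (simp add: kl_term_def algebra_simps)
qed (simp add: kl_term_def algebra_simps)

lemma kl_term_exp_shift:
  assumes "0 < b" "0 \<le> x"
  shows "kl_term x (b * exp (- y)) = kl_term x b + y * x - b * (1 - exp (- y))"
proof (cases "x = 0")
  case False
  then show ?thesis using assms by (simp add: kl_term_def ln_div ln_mult algebra_simps)
qed (simp add: algebra_simps)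

lemma kl_term_exp_tilt:
  assumes "0 < b" "0 \<le> x"
  shows "b * (1 - exp (- y)) \<le> kl_term x b + y * x"
  using kl_term_nonneg[of "b * exp (- y)" x] kl_term_exp_shift[OF assms, of y] assms by simp

lemma KL_nonneg:
  assumes "\<forall>i<n. 0 < \<nu> i" "\<forall>i<n. 0 \<le> \<mu> i"
  shows "0 \<le> KL n \<mu> \<nu>"
  unfolding KL_eq_sum_kl_term using assms by (intro sum_nonneg) (simp add: kl_term_nonneg)

lemma KL_le_0_imp_eq:
  assumes "\<forall>i<n. 0 < \<nu> i" "\<forall>i<n. 0 \<le> \<mu> i" "KL n \<mu> \<nu> \<le> 0"
  shows "\<forall>i<n. \<mu> i = \<nu> i"
proof -
  have "\<forall>i\<in>{..<n}. 0 \<le> kl_term (\<mu> i) (\<nu> i)" using assms by (simp add: kl_term_nonneg)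
  then have "\<forall>i\<in>{..<n}. kl_term (\<mu> i) (\<nu> i) = 0"
    using assms(3) KL_nonneg[OF assms(1,2)]
      sum_nonneg_eq_0_iff[of "{..<n}" "\<lambda>i. kl_term (\<mu> i) (\<nu> i)"]
    by (simp add: KL_eq_sum_kl_term)
  then show ?thesis using assms by (simp add: kl_term_le_0_imp_eq)
qed

section \<open>KL projection onto the dense measures\<close>

lemma GammaD:
  assumes "\<mu> \<in> Gamma \<kappa> n" "0 < n"
  shows "\<forall>i<n. 0 \<le> \<mu> i \<and> \<mu> i \<le> 1" "\<forall>i\<ge>n. \<mu> i = 0" "\<kappa> * real n \<le> msize n \<mu>"
  using assms by (auto simp: Gamma_def measures_def density_def le_divide_eq)

lemma Gamma_induced_le:
  assumes "\<mu> \<in> Gamma \<kappa> n" "0 < \<kappa>" "0 < n" "i < n"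
  shows "induced n \<mu> i \<le> 1 / (\<kappa> * real n)"
proof -
  note \<mu> = GammaD[OF assms(1,3)]
  have "0 < \<kappa> * real n" using assms by simp
  then have "0 < msize n \<mu>" using \<mu>(3) by linarith
  then have "\<mu> i / msize n \<mu> \<le> 1 / msize n \<mu>"
    using \<mu>(1) assms by (simp add: divide_right_mono)
  also have "\<dots> \<le> 1 / (\<kappa> * real n)" using \<mu>(3) assms by (simp add: frac_le)
  finally show ?thesis by (simp add: induced_def)
qed

lemma scaled_indicator_in_Gamma:
  assumes "E \<subseteq> {..<n}" "0 < \<kappa>" "0 < n" "\<kappa> * real n \<le> real (card E)"
  shows "(\<lambda>i. if i \<in> E then \<kappa> * real n / real (card E) else 0) \<in> Gamma \<kappa> n"
proof -
  have "0 < \<kappa> * real n" using assms(2,3) by simp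
  then have "0 < real (card E)" using assms(4) by linarith
  moreover have "(\<Sum>i<n. if i \<in> E then c else 0) = real (card E) * c" for c :: real
    using assms(1) by (simp add: sum.If_cases Int_absorb1)
  ultimately show ?thesis
    using assms by (auto simp: Gamma_def measures_def density_def msize_def)
qed

lemma clip_scale_exists:
  assumes "\<kappa> \<le> 1" "\<forall>i<n. 0 < a i"
  obtains c :: real where "1 \<le> c" "\<kappa> * real n \<le> (\<Sum>i<n. min 1 (c * a i))"
    "c = 1 \<or> (\<Sum>i<n. min 1 (c * a i)) = \<kappa> * real n"
proof -
  define f where "f c = (\<Sum>i<n. min 1 (c * a i))" for c
  define M where "M = 1 + (\<Sum>i<n. 1 / a i)"
  have M: "1 / a i \<le> M" if "i < n" for i
  proof -
    have "1 / a i \<le> (\<Sum>i<n. 1 / a i)"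
      by (rule member_le_sum) (use that assms(2) in auto)
    then show ?thesis unfolding M_def by simp
  qed
  have "0 \<le> (\<Sum>i<n. 1 / a i)" using assms(2) by (intro sum_nonneg) (simp add: less_imp_le)
  then have "1 \<le> M" unfolding M_def by simp
  moreover have "\<kappa> * real n \<le> f M"
  proof -
    have "f M = real n"
      unfolding f_def using M assms(2) by (simp add: divide_le_eq mult.commute)
    then show ?thesis using assms(1) mult_right_mono[of \<kappa> 1 "real n"] by simp
  qed
  moreover have "continuous_on {1..M} f" unfolding f_def by (intro continuous_intros)
  ultimately have "f 1 < \<kappa> * real n \<Longrightarrow> \<exists>c\<ge>1. f c = \<kappa> * real n"
    using IVT'[of f 1 "\<kappa> * real n" M] by auto
  then show ?thesis
  proof (cases "f 1 < \<kappa> * real n")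
    case True
    then show ?thesis using \<open>f 1 < \<kappa> * real n \<Longrightarrow> _\<close> that unfolding f_def by auto
  qed (use that[of 1] f_def in auto)
qed

lemma clip_cross_term:
  fixes a c v :: real
  assumes "0 < a" "0 < c" "v \<le> 1"
  shows "(v - min 1 (c * a)) * ln c \<le> (v - min 1 (c * a)) * ln (min 1 (c * a) / a)"
proof (cases "c * a \<le> 1")
  case False
  then have "ln (1 / a) \<le> ln c" using assms by (simp add: divide_le_eq mult.commute)
  then show ?thesis using False assms(3) by (simp add: mult_left_mono_neg)
qed (use assms in simp)

text \<open>The KL projection onto \<open>Gamma \<kappa> n\<close> is a rescaled copy of \<open>a\<close> clipped at 1.\<close>
lemma clip_pythagorean:
  fixes c :: real
  assumes "\<forall>i<n. 0 < a i" "1 \<le> c" "\<forall>i<n. m i = min 1 (c * a i)" "v \<in> measures n"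
    and "c = 1 \<or> msize n m \<le> msize n v"
  shows "KL n m a + KL n v m \<le> KL n v a"
proof -
  have v: "\<forall>i<n. 0 \<le> v i \<and> v i \<le> 1" using assms(4) by (simp add: measures_def)
  have m: "\<forall>i<n. 0 < m i" using assms(1-3) by simp
  have "KL n v a = KL n m a + KL n v m + (\<Sum>i<n. (v i - m i) * ln (m i / a i))"
    unfolding KL_eq_sum_kl_term sum.distrib[symmetric]
  proof (rule sum.cong)
    fix i assume "i \<in> {..<n}"
    then show "kl_term (v i) (a i) = kl_term (m i) (a i) + kl_term (v i) (m i) + (v i - m i) * ln (m i / a i)"
      using kl_term_three_point[of "a i" "m i" "v i"] assms(1) m v by simp
  qed simp
  moreover have "ln c * (msize n v - msize n m) = (\<Sum>i<n. (v i - m i) * ln c)"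
    by (simp add: msize_def sum_subtractf sum_distrib_left algebra_simps)
  moreover have "\<dots> \<le> (\<Sum>i<n. (v i - m i) * ln (m i / a i))"
    using assms(1-3) v by (intro sum_mono) (simp add: clip_cross_term)
  moreover have "0 \<le> ln c * (msize n v - msize n m)"
    using assms(2,5) by auto
  ultimately show ?thesis by linarith
qed

lemma KL_projection_exists:
  assumes "0 < n" "\<kappa> \<le> 1" "\<forall>i<n. 0 < a i"
  shows "\<exists>m\<in>Gamma \<kappa> n. (\<forall>i<n. 0 < m i) \<and> (\<forall>v\<in>Gamma \<kappa> n. KL n m a + KL n v m \<le> KL n v a)"
proof -
  obtain c where c: "1 \<le> c" "\<kappa> * real n \<le> (\<Sum>i<n. min 1 (c * a i))"
    "c = 1 \<or> (\<Sum>i<n. min 1 (c * a i)) = \<kappa> * real n"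
    using clip_scale_exists[OF assms(2,3)] by blast
  define m where "m i = (if i < n then min 1 (c * a i) else 0)" for i
  have msize_m: "msize n m = (\<Sum>i<n. min 1 (c * a i))" by (simp add: msize_def m_def)
  have "m \<in> Gamma \<kappa> n"
    using assms c by (auto simp: Gamma_def measures_def density_def le_divide_eq m_def msize_m)
  moreover have "\<forall>i<n. 0 < m i" using assms(3) c(1) by (simp add: m_def)
  moreover have "KL n m a + KL n v m \<le> KL n v a" if "v \<in> Gamma \<kappa> n" for v
    using clip_pythagorean[OF assms(3) c(1), of m v] GammaD[OF that assms(1)] c(3) that
    by (auto simp: m_def msize_m Gamma_def)
  ultimately show ?thesis by blast
qed

lemma proj_pythagorean_point:
  assumes "0 < n" "\<kappa> \<le> 1" "\<forall>i<n. 0 < a i"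
  shows "proj \<kappa> n a \<in> Gamma \<kappa> n" "\<forall>i<n. 0 < proj \<kappa> n a i"
    "\<forall>v\<in>Gamma \<kappa> n. KL n (proj \<kappa> n a) a + KL n v (proj \<kappa> n a) \<le> KL n v a"
proof -
  obtain m where m: "m \<in> Gamma \<kappa> n" "\<forall>i<n. 0 < m i"
    and pyth: "\<forall>v\<in>Gamma \<kappa> n. KL n m a + KL n v m \<le> KL n v a"
    using KL_projection_exists[OF assms] by blast
  have "KL n m a \<le> KL n v a" if "v \<in> Gamma \<kappa> n" for v
    using KL_nonneg[of n m v] m(2) GammaD[OF that assms(1)] pyth that by force
  then have "\<exists>\<mu>. \<mu> \<in> Gamma \<kappa> n \<and> (\<forall>v\<in>Gamma \<kappa> n. KL n \<mu> a \<le> KL n v a)"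
    using m(1) by blast
  then have p: "proj \<kappa> n a \<in> Gamma \<kappa> n \<and> (\<forall>v\<in>Gamma \<kappa> n. KL n (proj \<kappa> n a) a \<le> KL n v a)"
    unfolding proj_def by (rule someI_ex)
  have "KL n (proj \<kappa> n a) m \<le> 0" using pyth p m(1) by force
  then have "\<forall>i<n. proj \<kappa> n a i = m i"
    using KL_le_0_imp_eq m(2) GammaD[OF conjunct1[OF p] assms(1)] by blast
  moreover have "\<forall>i\<ge>n. proj \<kappa> n a i = m i"
    using GammaD[OF conjunct1[OF p] assms(1)] GammaD[OF m(1) assms(1)] by simp
  ultimately have "proj \<kappa> n a = m" by (meson ext not_le)
  then show "proj \<kappa> n a \<in> Gamma \<kappa> n" "\<forall>i<n. 0 < proj \<kappa> n a i"
    "\<forall>v\<in>Gamma \<kappa> n. KL n (proj \<kappa> n a) a + KL n v (proj \<kappa> n a) \<le> KL n v a"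
    using m pyth by simp_all
qed

section \<open>Multiplicative weights with lazy projection\<close>

lemma one_minus_exp_neg_ge:
  fixes x :: real
  assumes "0 \<le> x"
  shows "x - x^2 / 2 \<le> 1 - exp (- x)"
proof -
  have p: "0 < 1 + x + x^2/2" using assms by (simp add: add_pos_nonneg)
  have "exp (- x) = 1 / exp x" by (simp add: exp_minus field_simps)
  also have "\<dots> \<le> 1 / (1 + x + x^2/2)"
    using exp_lower_Taylor_quadratic[OF assms] p by (simp add: frac_le)
  also have "\<dots> \<le> 1 - x + x^2/2"
  proof -
    have "(1 - x + x^2/2) * (1 + x + x^2/2) = 1 + x^4/4"
      by (simp add: algebra_simps power2_eq_square power4_eq_xxxx)
    then show ?thesis using p by (simp add: divide_le_eq)
  qed
  finally show ?thesis by simp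
qed

lemma weighted_one_minus_exp_ge:
  fixes \<mu> l :: "'a \<Rightarrow> real"
  assumes "\<forall>i\<in>A. 0 \<le> \<mu> i" "\<forall>i\<in>A. 0 \<le> l i \<and> l i \<le> 1" "0 \<le> \<eta>"
  shows "\<eta> * (\<Sum>i\<in>A. \<mu> i * l i) - \<eta>\<^sup>2 / 2 * (\<Sum>i\<in>A. \<mu> i)
    \<le> (\<Sum>i\<in>A. \<mu> i * (1 - exp (- \<eta> * l i)))"
proof -
  have "\<eta> * l i - \<eta>\<^sup>2 / 2 \<le> 1 - exp (- \<eta> * l i)" if "i \<in> A" for i
  proof -
    have "(\<eta> * l i)\<^sup>2 \<le> \<eta>\<^sup>2"
      using assms that by (simp add: power_mult_distrib mult_right_le_one_le power_le_one)
    moreover have "0 \<le> \<eta> * l i" using assms that by simp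
    ultimately show ?thesis using one_minus_exp_neg_ge[of "\<eta> * l i"] by simp
  qed
  then have "(\<Sum>i\<in>A. \<mu> i * (\<eta> * l i - \<eta>\<^sup>2 / 2)) \<le> (\<Sum>i\<in>A. \<mu> i * (1 - exp (- \<eta> * l i)))"
    using assms(1) by (intro sum_mono mult_left_mono) auto
  moreover have "(\<Sum>i\<in>A. \<mu> i * (\<eta> * l i - \<eta>\<^sup>2 / 2))
      = \<eta> * (\<Sum>i\<in>A. \<mu> i * l i) - \<eta>\<^sup>2 / 2 * (\<Sum>i\<in>A. \<mu> i)"
    by (simp add: sum_subtractf sum_distrib_left sum_distrib_right right_diff_distrib mult_ac)
  ultimately show ?thesis by simp
qed

text \<open>\<open>weights t\<close> and \<open>mu t\<close> are the measures mu~_t and mu_t of LB-NxM with learning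
  rate \<open>\<eta>\<close>; rounds are numbered from 1.\<close>
locale lazy_projection =
  fixes \<kappa> \<eta> :: real and n :: nat and loss :: "nat \<Rightarrow> nat \<Rightarrow> real"
  assumes kappa_pos: "0 < \<kappa>" and kappa_le_1: "\<kappa> \<le> 1" and n_pos: "0 < n"
begin

definition weights :: "nat \<Rightarrow> nat \<Rightarrow> real" where
  "weights t i = (if i < n then \<kappa> * exp (- \<eta> * (\<Sum>j\<in>{1..<t}. loss j i)) else 0)"

definition mu :: "nat \<Rightarrow> nat \<Rightarrow> real" where
  "mu t = proj \<kappa> n (weights t)"

lemma weights_pos: "i < n \<Longrightarrow> 0 < weights t i"
  using kappa_pos by (simp add: weights_def)

lemma weights_Suc:
  assumes "1 \<le> t" "i < n"
  shows "weights (Suc t) i = weights t i * exp (- \<eta> * loss t i)"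
proof -
  have "(\<Sum>j\<in>{1..<Suc t}. loss j i) = (\<Sum>j\<in>{1..<t}. loss j i) + loss t i"
    using assms(1) by simp
  then show ?thesis using assms(2) by (simp add: weights_def algebra_simps exp_add[symmetric])
qed

lemma msize_weights_1: "msize n (weights 1) = \<kappa> * real n"
  by (simp add: msize_def weights_def)

lemma
  shows mu_in_Gamma: "mu t \<in> Gamma \<kappa> n"
    and mu_pos: "i < n \<Longrightarrow> 0 < mu t i"
    and mu_pythagorean:
      "v \<in> Gamma \<kappa> n \<Longrightarrow> KL n (mu t) (weights t) + KL n v (mu t) \<le> KL n v (weights t)"
  using proj_pythagorean_point[OF n_pos kappa_le_1, of "weights t"] weights_pos
  unfolding mu_def by blast+

lemma msize_mu_pos: "0 < msize n (mu t)"
proof -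
  have "0 < \<kappa> * real n" using kappa_pos n_pos by simp
  then show ?thesis using GammaD(3)[OF mu_in_Gamma[of t] n_pos] by linarith
qed

lemma mu_nonneg: "i < n \<Longrightarrow> 0 \<le> mu t i"
  using mu_pos by (simp add: less_imp_le)

text \<open>The projection is lazy: \<open>weights (Suc t)\<close> tilts \<open>weights t\<close>, not \<open>mu t\<close>, so
  consecutive potentials are compared through the Pythagorean inequality at \<open>weights t\<close>.\<close>
lemma potential_step:
  assumes "1 \<le> t"
  shows "KL n (mu t) (weights t) + (\<Sum>i<n. mu t i * (1 - exp (- \<eta> * loss t i)))
           + msize n (weights (Suc t)) - msize n (weights t)
         \<le> KL n (mu (Suc t)) (weights (Suc t))"
proof -
  let ?m = "mu (Suc t)"
  have "KL n ?m (weights (Suc t))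
      = KL n ?m (weights t) + (\<Sum>i<n. \<eta> * loss t i * ?m i)
        + msize n (weights (Suc t)) - msize n (weights t)"
  proof -
    have "KL n ?m (weights (Suc t)) = (\<Sum>i<n. kl_term (?m i) (weights t i)
        + \<eta> * loss t i * ?m i - weights t i * (1 - exp (- \<eta> * loss t i)))"
      unfolding KL_eq_sum_kl_term using assms weights_Suc weights_pos mu_nonneg
      by (intro sum.cong) (simp_all add: kl_term_exp_shift)
    moreover have "msize n (weights (Suc t)) - msize n (weights t)
        = - (\<Sum>i<n. weights t i * (1 - exp (- \<eta> * loss t i)))"
      using assms weights_Suc
      by (simp add: msize_def sum_subtractf[symmetric] sum_negf[symmetric] algebra_simps)
    ultimately show ?thesis
      by (simp add: KL_eq_sum_kl_term sum.distrib sum_subtractf)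
  qed
  moreover have "(\<Sum>i<n. mu t i * (1 - exp (- \<eta> * loss t i)))
      \<le> KL n ?m (mu t) + (\<Sum>i<n. \<eta> * loss t i * ?m i)"
    unfolding KL_eq_sum_kl_term sum.distrib[symmetric]
    using mu_pos mu_nonneg by (intro sum_mono) (simp add: kl_term_exp_tilt mult.commute)
  moreover have "KL n (mu t) (weights t) + KL n ?m (mu t) \<le> KL n ?m (weights t)"
    using mu_pythagorean mu_in_Gamma by blast
  ultimately show ?thesis by linarith
qed

lemma regret_bound:
  assumes "v \<in> Gamma \<kappa> n"
  shows "(\<Sum>t=1..T. \<Sum>i<n. mu t i * (1 - exp (- \<eta> * loss t i)))
     \<le> \<kappa> * real n + (\<Sum>i<n. v i * ln (v i / \<kappa>) - v i + \<eta> * (\<Sum>t=1..T. loss t i) * v i)"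
proof -
  define Phi where "Phi t = KL n (mu t) (weights t) - msize n (weights t)" for t
  have "(\<Sum>t=1..T. \<Sum>i<n. mu t i * (1 - exp (- \<eta> * loss t i))) \<le> (\<Sum>t=1..T. Phi (Suc t) - Phi t)"
    using potential_step unfolding Phi_def by (intro sum_mono) fastforce
  also have "\<dots> = Phi (Suc T) - Phi 1" by (simp add: sum_Suc_diff)
  finally have "(\<Sum>t=1..T. \<Sum>i<n. mu t i * (1 - exp (- \<eta> * loss t i))) \<le> Phi (Suc T) - Phi 1" .
  moreover have "- Phi 1 \<le> \<kappa> * real n"
    using KL_nonneg[of n "weights 1" "mu 1"] weights_pos mu_nonneg msize_weights_1
    by (simp add: Phi_def)
  moreover have "Phi (Suc T) \<le> KL n v (weights (Suc T)) - msize n (weights (Suc T))"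
    using mu_pythagorean[OF assms, of "Suc T"] KL_nonneg[of n "mu (Suc T)" v] mu_pos
      GammaD[OF assms n_pos]
    by (simp add: Phi_def)
  moreover have "KL n v (weights (Suc T)) - msize n (weights (Suc T))
      = (\<Sum>i<n. v i * ln (v i / \<kappa>) - v i + \<eta> * (\<Sum>t=1..T. loss t i) * v i)"
    unfolding KL_eq_sum_kl_term msize_def sum_subtractf[symmetric]
  proof (rule sum.cong)
    fix i assume "i \<in> {..<n}"
    then have "weights (Suc T) i = \<kappa> * exp (- (\<eta> * (\<Sum>t=1..T. loss t i)))"
      by (simp add: weights_def atLeastLessThanSuc_atLeastAtMost)
    then show "kl_term (v i) (weights (Suc T) i) - weights (Suc T) i
        = v i * ln (v i / \<kappa>) - v i + \<eta> * (\<Sum>t=1..T. loss t i) * v i"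
      using kl_term_exp_shift[of \<kappa> "v i"] kappa_pos GammaD[OF assms n_pos] \<open>i \<in> {..<n}\<close>
      by (simp add: kl_term_def algebra_simps)
  qed simp
  ultimately show ?thesis by linarith
qed

lemma regret_bound_on_set:
  assumes "0 \<le> \<eta>" "E \<subseteq> {..<n}" "\<kappa> * real n \<le> real (card E)"
    and "\<forall>i\<in>E. (\<Sum>t=1..T. loss t i) \<le> G"
  shows "(\<Sum>t=1..T. \<Sum>i<n. mu t i * (1 - exp (- \<eta> * loss t i)))
     \<le> \<kappa> * real n * (ln (real n / real (card E)) + \<eta> * G)"
proof -
  define c where "c = \<kappa> * real n / real (card E)"
  have "0 < \<kappa> * real n" using kappa_pos n_pos by simp
  then have E_pos: "0 < real (card E)" using assms(3) by linarith
  have c_pos: "0 < c" using kappa_pos n_pos E_pos by (simp add: c_def)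
  have c_card: "real (card E) * c = \<kappa> * real n" using E_pos by (simp add: c_def)
  have c_ratio: "c / \<kappa> = real n / real (card E)" using kappa_pos by (simp add: c_def)
  define v where "v i = (if i \<in> E then c else 0)" for i
  have "v \<in> Gamma \<kappa> n"
    unfolding v_def c_def using scaled_indicator_in_Gamma assms(2,3) kappa_pos n_pos by blast
  note regret = regret_bound[OF this, of T]
  have "(\<Sum>i<n. v i * ln (v i / \<kappa>) - v i + \<eta> * (\<Sum>t=1..T. loss t i) * v i)
      = (\<Sum>i<n. if i \<in> E then c * ln (c / \<kappa>) - c + \<eta> * (\<Sum>t=1..T. loss t i) * c else 0)"
    by (intro sum.cong) (simp_all add: v_def)
  also have "\<dots> = (\<Sum>i\<in>E. c * ln (c / \<kappa>) - c + \<eta> * (\<Sum>t=1..T. loss t i) * c)"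
    using assms(2) by (simp add: sum.If_cases Int_absorb1)
  also have "\<dots> \<le> (\<Sum>i\<in>E. c * ln (c / \<kappa>) - c + \<eta> * G * c)"
    using assms(1,4) c_pos by (intro sum_mono) (simp add: mult_left_mono mult_right_mono)
  also have "\<dots> = real (card E) * c * (ln (c / \<kappa>) - 1 + \<eta> * G)"
    by (simp add: algebra_simps)
  also have "\<dots> = \<kappa> * real n * (ln (real n / real (card E)) + \<eta> * G) - \<kappa> * real n"
    using c_card c_ratio by (simp add: algebra_simps)
  finally show ?thesis using regret by linarith
qed

lemma low_gain_set_bound:
  assumes "0 < \<eta>" "\<eta> \<le> \<gamma>"
    and loss_bounds: "\<forall>t\<in>{1..T}. \<forall>i<n. 0 \<le> loss t i \<and> loss t i \<le> 1"
    and edge: "\<forall>t\<in>{1..T}. (1/2 + \<gamma>) * msize n (mu t) \<le> (\<Sum>i<n. mu t i * loss t i)"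
    and "E \<subseteq> {..<n}" "\<kappa> * real n \<le> real (card E)"
    and "\<forall>i\<in>E. (\<Sum>t=1..T. loss t i) \<le> real T * (1 + \<gamma>) / 2"
  shows "real T * \<eta> * (\<gamma> - \<eta>) / 2 \<le> ln (real n / real (card E))"
proof -
  have round: "\<eta> * (1/2 + \<gamma> - \<eta>/2) * (\<kappa> * real n)
      \<le> (\<Sum>i<n. mu t i * (1 - exp (- \<eta> * loss t i)))" if "t \<in> {1..T}" for t
  proof -
    have "\<eta> * (1/2 + \<gamma> - \<eta>/2) * (\<kappa> * real n) \<le> \<eta> * (1/2 + \<gamma> - \<eta>/2) * msize n (mu t)"
      using GammaD(3)[OF mu_in_Gamma n_pos] assms(1,2) by (intro mult_left_mono) auto
    also have "\<dots> \<le> \<eta> * (\<Sum>i<n. mu t i * loss t i) - \<eta>\<^sup>2 / 2 * msize n (mu t)"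
    proof -
      have "\<eta> * ((1/2 + \<gamma>) * msize n (mu t)) \<le> \<eta> * (\<Sum>i<n. mu t i * loss t i)"
        using edge that assms(1) by (intro mult_left_mono) auto
      then show ?thesis by (simp add: power2_eq_square algebra_simps)
    qed
    also have "\<dots> \<le> (\<Sum>i<n. mu t i * (1 - exp (- \<eta> * loss t i)))"
      using weighted_one_minus_exp_ge[of "{..<n}" "mu t" "loss t" \<eta>] mu_nonneg loss_bounds that
        assms(1) by (simp add: msize_def)
    finally show ?thesis .
  qed
  have "(\<Sum>t=1..T. \<eta> * (1/2 + \<gamma> - \<eta>/2) * (\<kappa> * real n))
      \<le> (\<Sum>t=1..T. \<Sum>i<n. mu t i * (1 - exp (- \<eta> * loss t i)))"
    using round by (rule sum_mono)
  also have "\<dots> \<le> \<kappa> * real n * (ln (real n / real (card E)) + \<eta> * (real T * (1 + \<gamma>) / 2))"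
    using assms by (intro regret_bound_on_set) auto
  finally have "\<kappa> * real n * (real T * \<eta> * (1/2 + \<gamma> - \<eta>/2))
      \<le> \<kappa> * real n * (ln (real n / real (card E)) + \<eta> * (real T * (1 + \<gamma>) / 2))"
    by (simp add: mult_ac)
  then have "real T * \<eta> * (1/2 + \<gamma> - \<eta>/2) \<le> ln (real n / real (card E)) + \<eta> * (real T * (1 + \<gamma>) / 2)"
    using kappa_pos n_pos by simp
  moreover have "real T * \<eta> * (1/2 + \<gamma> - \<eta>/2) - \<eta> * (real T * (1 + \<gamma>) / 2) = real T * \<eta> * (\<gamma> - \<eta>) / 2"
    by (simp add: algebra_simps)
  ultimately show ?thesis by linarith
qed

end

section \<open>Boosting with LB-NxM\<close>

lemma gain_eq_margin:
  assumes "Y i = 1 \<or> Y i = -1" "-1 \<le> h (X i)" "h (X i) \<le> 1"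
  shows "gain h X Y i = (1 + Y i * h (X i)) / 2"
  using assms by (auto simp: gain_def abs_if)

lemma gain_bounds:
  assumes "Y i = 1 \<or> Y i = -1" "-1 \<le> h (X i)" "h (X i) \<le> 1"
  shows "0 \<le> gain h X Y i \<and> gain h X Y i \<le> 1"
  using assms by (auto simp: gain_eq_margin)

lemma weak_hyp_edge:
  assumes "weak_hyp \<gamma> n X Y (induced n \<mu>) h" "0 < msize n \<mu>"
  shows "(1/2 + \<gamma>) * msize n \<mu> \<le> (\<Sum>i<n. \<mu> i * gain h X Y i)"
proof -
  define err where "err = (\<Sum>i<n. \<mu> i * \<bar>h (X i) - Y i\<bar>)"
  have "(\<Sum>i<n. induced n \<mu> i * \<bar>h (X i) - Y i\<bar>) = err / msize n \<mu>"
    by (simp add: induced_def err_def sum_divide_distrib)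
  then have "err / msize n \<mu> \<le> 1 - 2 * \<gamma>"
    using assms(1) unfolding weak_hyp_def by linarith
  then have "err \<le> (1 - 2 * \<gamma>) * msize n \<mu>" using assms(2) by (simp add: divide_le_eq)
  moreover have "(\<Sum>i<n. \<mu> i * gain h X Y i) = msize n \<mu> - err / 2"
    by (simp add: gain_def err_def msize_def algebra_simps sum_subtractf sum_divide_distrib)
  ultimately show ?thesis by (simp add: algebra_simps)
qed

lemma cumulative_gain_le:
  assumes "0 < T" "Y i = 1 \<or> Y i = -1" "\<forall>t\<in>{1..T}. -1 \<le> h t (X i) \<and> h t (X i) \<le> 1"
    and "Y i * ((1 / real T) * (\<Sum>t=1..T. h t (X i))) \<le> \<gamma>"
  shows "(\<Sum>t=1..T. gain (h t) X Y i) \<le> real T * (1 + \<gamma>) / 2"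
proof -
  have "(\<Sum>t=1..T. gain (h t) X Y i) = (\<Sum>t=1..T. (1 + Y i * h t (X i)) / 2)"
    using assms(2,3) by (intro sum.cong) (simp_all add: gain_eq_margin)
  also have "\<dots> = (real T + Y i * (\<Sum>t=1..T. h t (X i))) / 2"
    by (simp add: sum_divide_distrib[symmetric] sum.distrib sum_distrib_left)
  also have "\<dots> \<le> real T * (1 + \<gamma>) / 2"
    using assms(1,4) by (simp add: divide_le_eq algebra_simps)
  finally show ?thesis .
qed

locale lb_boosting = lazy_projection \<kappa> \<eta> n "\<lambda>t. gain (h t) X Y"
  for \<kappa> \<eta> :: real and n :: nat and X :: "nat \<Rightarrow> 'x" and Y :: "nat \<Rightarrow> real"
    and h :: "nat \<Rightarrow> 'x \<Rightarrow> real" +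
  fixes \<gamma> :: real and T :: nat
  assumes eta_pos: "0 < \<eta>" and eta_le_gamma: "\<eta> \<le> \<gamma>"
    and labels: "\<forall>i<n. Y i = 1 \<or> Y i = -1"
    and weak_learner: "\<forall>t\<in>{1..T}. weak_hyp \<gamma> n X Y (lb_nxm \<kappa> \<eta> n X Y h t) (h t)"
begin

definition low_margin :: "nat set" where
  "low_margin = {i. i < n \<and> Y i * ((1 / real T) * (\<Sum>t=1..T. h t (X i))) \<le> \<gamma>}"

lemma lb_nxm_eq_induced_mu: "lb_nxm \<kappa> \<eta> n X Y h t = induced n (mu t)"
  by (simp add: lb_nxm_def mu_def weights_def[abs_def])

lemma lb_nxm_le: "i < n \<Longrightarrow> lb_nxm \<kappa> \<eta> n X Y h t i \<le> 1 / (\<kappa> * real n)"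
  using Gamma_induced_le[OF mu_in_Gamma kappa_pos n_pos] by (simp add: lb_nxm_eq_induced_mu)

lemma hyp_bounds: "t \<in> {1..T} \<Longrightarrow> -1 \<le> h t z \<and> h t z \<le> 1"
  using weak_learner by (simp add: weak_hyp_def)

lemma low_margin_bound:
  assumes "0 < T" "\<kappa> * real n \<le> real (card low_margin)"
  shows "real T * \<eta> * (\<gamma> - \<eta>) / 2 \<le> ln (real n / real (card low_margin))"
proof (rule low_gain_set_bound)
  show "\<forall>t\<in>{1..T}. \<forall>i<n. 0 \<le> gain (h t) X Y i \<and> gain (h t) X Y i \<le> 1"
    using labels hyp_bounds gain_bounds by blast
  show "\<forall>t\<in>{1..T}. (1/2 + \<gamma>) * msize n (mu t) \<le> (\<Sum>i<n. mu t i * gain (h t) X Y i)"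
    using weak_hyp_edge weak_learner msize_mu_pos unfolding lb_nxm_eq_induced_mu by blast
  show "\<forall>i\<in>low_margin. (\<Sum>t=1..T. gain (h t) X Y i) \<le> real T * (1 + \<gamma>) / 2"
  proof
    fix i assume "i \<in> low_margin"
    then show "(\<Sum>t=1..T. gain (h t) X Y i) \<le> real T * (1 + \<gamma>) / 2"
      using assms(1) labels hyp_bounds by (intro cumulative_gain_le) (auto simp: low_margin_def)
  qed
qed (use eta_pos eta_le_gamma assms(2) in \<open>auto simp: low_margin_def\<close>)

lemma low_margin_density_le:
  assumes "0 < T" "ln (1 / \<kappa>) < real T * \<eta> * (\<gamma> - \<eta>) / 2"
  shows "real (card low_margin) / real n \<le> \<kappa>"
proof (rule ccontr)
  assume "\<not> ?thesis"
  then have large: "\<kappa> * real n < real (card low_margin)" using n_pos by (simp add: field_simps)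
  have "0 < \<kappa> * real n" using kappa_pos n_pos by simp
  then have "0 < real (card low_margin)" using large by linarith
  moreover from this have "real n / real (card low_margin) < 1 / \<kappa>"
    using large kappa_pos by (simp add: field_simps)
  ultimately have "ln (real n / real (card low_margin)) < ln (1 / \<kappa>)"
    using kappa_pos n_pos by (intro ln_less_cancel_iff[THEN iffD2]) simp_all
  then show False using low_margin_bound[OF assms(1)] large assms(2) by simp
qed

end

theorem mainTheorem3:
  fixes \<kappa> \<gamma> :: real and n T :: nat and X :: "nat \<Rightarrow> 'x" and Y :: "nat \<Rightarrow> real"
    and h :: "nat \<Rightarrow> 'x \<Rightarrow> real"
  assumes "0 < \<kappa>" "\<kappa> < 1" "0 < \<gamma>" "0 < n"
    and "\<forall>i<n. Y i = 1 \<or> Y i = -1"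
    and "real T \<ge> 16 * ln (1 / \<kappa>) / \<gamma>^2"
    and "\<forall>t\<in>{1..T}. weak_hyp \<gamma> n X Y (lb_nxm \<kappa> (\<gamma>/4) n X Y h t) (h t)"
  shows "real (card {i. i < n \<and> Y i * ((1 / real T) * (\<Sum>t=1..T. h t (X i))) \<le> \<gamma>}) / real n \<le> \<kappa>
         \<and> (\<forall>t\<in>{1..T}. \<forall>i<n. lb_nxm \<kappa> (\<gamma>/4) n X Y h t i \<le> 1 / (\<kappa> * real n))"
proof -
  interpret lb_boosting \<kappa> "\<gamma>/4" n X Y h \<gamma> T
    using assms by unfold_locales auto
  have ln_pos: "0 < ln (1 / \<kappa>)" using assms(1,2) by simp
  have T_bound: "16 * ln (1 / \<kappa>) \<le> real T * \<gamma>\<^sup>2"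
    using assms(3,6) by (simp add: divide_le_eq)
  then have "0 < T" using ln_pos by (cases T) auto
  moreover have "ln (1 / \<kappa>) < real T * (\<gamma>/4) * (\<gamma> - \<gamma>/4) / 2"
    using T_bound ln_pos by (simp add: power2_eq_square)
  ultimately have "real (card low_margin) / real n \<le> \<kappa>"
    by (rule low_margin_density_le)
  then show ?thesis using lb_nxm_le by (simp add: low_margin_def)
qed

end
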